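(* Let $N=\{1,2,\dots,n\}$ be a set of players and let $v:2^N\to\mathbb{R}$ be a monotonic characteristic function. Let $x=(x_1,\dots,x_n)$ be a payoff vector, where the players are indexed so that $x_1\le x_2\le\dots\le x_n$. Then $x$ is stable if and only if for every $i\in\{1,\dots,n\}$, $$x_i \;\ge\; v\Big(\bigcup_{j\le i}\{j\}\Big)=v(\{1,2,\dots,i\}).$$
   Context: A characteristic function $v:2^N\to\mathbb{R}$ assigns to each coalition $C\subseteq N$ the value $v(C)$ (e.g. the value of the model learnt from the pooled data of the players in $C$). It is monotonic if $C\subseteq C'$ implies $v(C)\le v(C')$. In this (modified) cooperative game, when the grand coalition $N$ forms, a payoff vector is a vector $x=(x_1,\dots,x_n)\in\mathbb{R}^n$ with $x_i\le v(N)$ for every player $i$ (each player individually receives at most the value created by the coalition; the sum of payoffs is not restricted). A payoff vector $x$ is stable if for every nonempty coalition $C\subseteq N$ there exists a player $k\in C$ with $x_k\ge v(C)$. *)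

theory Defs
  imports Complex_Main
begin

text \<open>Players are N = {1..n}; a characteristic function is v :: nat set => real,
  only its values on subsets of N matter.\<close>

definition monotonic_game :: "nat set \<Rightarrow> (nat set \<Rightarrow> real) \<Rightarrow> bool" where
  "monotonic_game N v \<longleftrightarrow> (\<forall>C C'. C \<subseteq> C' \<and> C' \<subseteq> N \<longrightarrow> v C \<le> v C')"

definition payoff_vector :: "nat set \<Rightarrow> (nat set \<Rightarrow> real) \<Rightarrow> (nat \<Rightarrow> real) \<Rightarrow> bool" where
  "payoff_vector N v x \<longleftrightarrow> (\<forall>i\<in>N. x i \<le> v N)"

definition stable :: "nat set \<Rightarrow> (nat set \<Rightarrow> real) \<Rightarrow> (nat \<Rightarrow> real) \<Rightarrow> bool" where
  "stable N v x \<longleftrightarrow> (\<forall>C. C \<subseteq> N \<and> C \<noteq> {} \<longrightarrow> (\<exists>k\<in>C. x k \<ge> v C))"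

end

theory Submission
  imports Defs
begin

text \<open>A coalition \<open>C\<close> with largest member \<open>m\<close> lies in the prefix \<open>{j \<in> N. j \<le> m}\<close>, so by
  monotonicity \<open>v C\<close> is at most the value of that prefix; as payoffs increase with the index,
  \<open>m\<close> is also the member of \<open>C\<close> with the largest payoff. Hence stability only has to be checked
  on prefixes, and on a prefix it amounts to the bound at its last player.\<close>

lemma stable_imp_prefix_bound:
  assumes "stable N v x" and "mono_on N x" and "i \<in> N"
  shows "v {j \<in> N. j \<le> i} \<le> x i"
proof -
  have "{j \<in> N. j \<le> i} \<subseteq> N" "{j \<in> N. j \<le> i} \<noteq> {}"
    using \<open>i \<in> N\<close> by auto
  then obtain k where k: "k \<in> N" "k \<le> i" "v {j \<in> N. j \<le> i} \<le> x k"
    using \<open>stable N v x\<close> unfolding stable_def by blast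
  moreover have "x k \<le> x i"
    using \<open>mono_on N x\<close> k \<open>i \<in> N\<close> by (simp add: mono_on_def)
  ultimately show ?thesis
    by linarith
qed

lemma stable_if_prefix_bounds:
  assumes "finite N" and "monotonic_game N v"
    and prefix_bound: "\<forall>i\<in>N. v {j \<in> N. j \<le> i} \<le> x i"
  shows "stable N v x"
  unfolding stable_def
proof (intro allI impI)
  fix C
  assume C: "C \<subseteq> N \<and> C \<noteq> {}"
  then have "finite C"
    using \<open>finite N\<close> finite_subset by blast
  define m where "m = Max C"
  have "m \<in> C"
    using \<open>finite C\<close> C by (simp add: m_def)
  have "C \<subseteq> {j \<in> N. j \<le> m}"
    using \<open>finite C\<close> C by (auto simp: m_def)
  then have "v C \<le> v {j \<in> N. j \<le> m}"
    using \<open>monotonic_game N v\<close> unfolding monotonic_game_def by blast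
  also have "\<dots> \<le> x m"
    using prefix_bound \<open>m \<in> C\<close> C by blast
  finally show "\<exists>k\<in>C. v C \<le> x k"
    using \<open>m \<in> C\<close> by blast
qed

theorem proposition5:
  fixes n :: nat and v :: "nat set \<Rightarrow> real" and x :: "nat \<Rightarrow> real"
  assumes "monotonic_game {1..n} v"
    and "payoff_vector {1..n} v x"
    and "\<forall>i\<in>{1..n}. \<forall>j\<in>{1..n}. i \<le> j \<longrightarrow> x i \<le> x j"
  shows "stable {1..n} v x \<longleftrightarrow> (\<forall>i\<in>{1..n}. x i \<ge> v {1..i})"
proof -
  have prefix: "{j \<in> {1..n}. j \<le> i} = {1..i}" if "i \<in> {1..n}" for i
    using that by auto
  have "mono_on {1..n} x"
    using assms(3) by (auto intro: mono_onI)
  then show ?thesis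
    using stable_imp_prefix_bound[of "{1..n}" v x] stable_if_prefix_bounds[of "{1..n}" v x]
      assms(1) prefix by auto
qed

end
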